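(* Let $(z,w)\mapsto(f(z),aw+g(z))=:(z',w')$, with $f,g$ holomorphic and $a\in\mathbb{R}\setminus\{0\}$, be a local rigid biholomorphism of $\mathbb{C}^2$ mapping the rigid hypersurface $\{u=F(z,\bar z)\}$ into the rigid hypersurface $\{u'=F'(z',\bar z')\}$. Then $$F_{zz\bar z\bar z}F_{z\bar z}-F_{zz\bar z}F_{z\bar z\bar z}\equiv\frac1{a^2}\big(f_z\bar f_{\bar z}\big)^3\Big[F'_{z'z'\bar z'\bar z'}F'_{z'\bar z'}-F'_{z'z'\bar z'}F'_{z'\bar z'\bar z'}\Big],$$ where the derivatives of $F'$ are evaluated at $(f(z),\overline{f(z)})$.
   Context: Coordinates on $\mathbb{C}^2$ are $(z,w)$, $w=u+iv$; $F,F'$ are real-valued real-analytic; $\bar f_{\bar z}=\overline{f_z}$. *)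

theory Defs
  imports "HOL-Analysis.Analysis"
begin

text \<open>Real-analytic real-valued functions of z = x + i y: locally an absolutely
convergent double power series in (x - x0, y - y0).\<close>
definition real_analytic_on :: "(complex \<Rightarrow> real) \<Rightarrow> complex set \<Rightarrow> bool" where
  "real_analytic_on F U \<longleftrightarrow>
     (\<forall>z0\<in>U. \<exists>r>0. \<exists>c :: nat \<Rightarrow> nat \<Rightarrow> real.
        \<forall>x y. \<bar>x\<bar> < r \<and> \<bar>y\<bar> < r \<longrightarrow>
          ((\<lambda>(j,k). c j k * x ^ j * y ^ k) has_sum F (z0 + Complex x y)) UNIV)"

definition dx :: "(complex \<Rightarrow> complex) \<Rightarrow> complex \<Rightarrow> complex" where
  "dx h z = frechet_derivative h (at z) 1"

definition dy :: "(complex \<Rightarrow> complex) \<Rightarrow> complex \<Rightarrow> complex" where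
  "dy h z = frechet_derivative h (at z) \<i>"

definition Dz :: "(complex \<Rightarrow> complex) \<Rightarrow> complex \<Rightarrow> complex" where
  "Dz h = (\<lambda>z. (dx h z - \<i> * dy h z) / 2)"

definition Dzb :: "(complex \<Rightarrow> complex) \<Rightarrow> complex \<Rightarrow> complex" where
  "Dzb h = (\<lambda>z. (dx h z + \<i> * dy h z) / 2)"

end

theory Submission
  imports Defs "HOL-Complex_Analysis.Complex_Analysis"
begin

text \<open>Rigidity means \<open>a F = F' \<circ> f - Re g\<close> on \<open>U\<close>. With \<open>g\<close> holomorphic,
  \<open>Re g = (g + cnj g) / 2\<close> is killed by \<open>Dz \<circ> Dzb\<close>, so every derivative occurring in the
  invariant only sees \<open>F' \<circ> f / a\<close>. For holomorphic \<open>f\<close> the Wirtinger chain rule reads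
  \<open>Dz (h \<circ> f) = f' (Dz h \<circ> f)\<close> and \<open>Dzb (h \<circ> f) = cnj f' (Dzb h \<circ> f)\<close>; applying it repeatedly
  yields the factor \<open>(f' cnj f')\<^sup>3 / a\<^sup>2\<close>, while the terms involving \<open>f''\<close> cancel in the
  combination. Real-analyticity of \<open>F'\<close> is used only to ensure that the iterated Wirtinger
  derivatives of \<open>F'\<close> exist, by termwise differentiation of its double power series.\<close>

section \<open>Wirtinger calculus\<close>

lemma has_derivative_Wirtinger:
  assumes "h differentiable (at z)"
  shows "(h has_derivative (\<lambda>v. Dz h z * v + Dzb h z * cnj v)) (at z)"
proof -
  obtain D where D: "(h has_derivative D) (at z)"
    using assms differentiable_def by blast
  have "D v = Dz h z * v + Dzb h z * cnj v" for v
  proof -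
    have "v = Re v *\<^sub>R 1 + Im v *\<^sub>R \<i>" by (simp add: complex_eq_iff)
    then have "D v = Re v *\<^sub>R D 1 + Im v *\<^sub>R D \<i>"
      using has_derivative_linear[OF D] by (metis linear_add linear_scale)
    then show ?thesis
      unfolding Dz_def Dzb_def dx_def dy_def frechet_derivative_at[OF D, symmetric]
      by (simp add: scaleR_conv_of_real field_simps complex_eq_iff)
  qed
  with D show ?thesis by (metis (no_types, lifting) ext)
qed

lemma Dz_Dzb_eqI:
  assumes "(h has_derivative (\<lambda>v. a * v + b * cnj v)) (at z)"
  shows "Dz h z = a" "Dzb h z = b"
  using frechet_derivative_at[OF assms, symmetric]
  by (simp_all add: Dz_def Dzb_def dx_def dy_def field_simps)

lemma Dz_Dzb_cong_open:
  assumes "open U" "z \<in> U" "\<And>x. x \<in> U \<Longrightarrow> h1 x = h2 x"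
  shows "Dz h1 z = Dz h2 z" and "Dzb h1 z = Dzb h2 z"
proof -
  have "frechet_derivative h1 (at z) = frechet_derivative h2 (at z)"
    unfolding frechet_derivative_def
    using has_derivative_transform_within_open[OF _ assms(1,2)] assms(2,3) by metis
  then show "Dz h1 z = Dz h2 z" "Dzb h1 z = Dzb h2 z"
    by (simp_all add: Dz_def Dzb_def dx_def dy_def)
qed

lemma Dz_Dzb_add:
  assumes "h1 differentiable (at z)" "h2 differentiable (at z)"
  shows "Dz (\<lambda>x. h1 x + h2 x) z = Dz h1 z + Dz h2 z"
    and "Dzb (\<lambda>x. h1 x + h2 x) z = Dzb h1 z + Dzb h2 z"
proof -
  have "((\<lambda>x. h1 x + h2 x) has_derivative
      (\<lambda>v. (Dz h1 z + Dz h2 z) * v + (Dzb h1 z + Dzb h2 z) * cnj v)) (at z)"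
    by (rule has_derivative_eq_rhs[OF has_derivative_add[OF
          has_derivative_Wirtinger[OF assms(1)] has_derivative_Wirtinger[OF assms(2)]]])
       (simp add: algebra_simps)
  then show "Dz (\<lambda>x. h1 x + h2 x) z = Dz h1 z + Dz h2 z"
    and "Dzb (\<lambda>x. h1 x + h2 x) z = Dzb h1 z + Dzb h2 z"
    by (rule Dz_Dzb_eqI)+
qed

lemma Dz_Dzb_mult:
  assumes "h1 differentiable (at z)" "h2 differentiable (at z)"
  shows "Dz (\<lambda>x. h1 x * h2 x) z = Dz h1 z * h2 z + h1 z * Dz h2 z"
    and "Dzb (\<lambda>x. h1 x * h2 x) z = Dzb h1 z * h2 z + h1 z * Dzb h2 z"
proof -
  have "((\<lambda>x. h1 x * h2 x) has_derivative (\<lambda>v. (Dz h1 z * h2 z + h1 z * Dz h2 z) * v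
      + (Dzb h1 z * h2 z + h1 z * Dzb h2 z) * cnj v)) (at z)"
    by (rule has_derivative_eq_rhs[OF has_derivative_mult[OF
          has_derivative_Wirtinger[OF assms(1)] has_derivative_Wirtinger[OF assms(2)]]])
       (simp add: algebra_simps)
  then show "Dz (\<lambda>x. h1 x * h2 x) z = Dz h1 z * h2 z + h1 z * Dz h2 z"
    and "Dzb (\<lambda>x. h1 x * h2 x) z = Dzb h1 z * h2 z + h1 z * Dzb h2 z"
    by (rule Dz_Dzb_eqI)+
qed

lemma Dz_Dzb_holomorphic:
  assumes "f field_differentiable (at z)"
  shows "Dz f z = deriv f z" and "Dzb f z = 0"
proof -
  have "(f has_derivative (\<lambda>v. deriv f z * v + 0 * cnj v)) (at z)"
    using field_differentiable_derivI[OF assms] by (simp add: has_field_derivative_def)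
  then show "Dz f z = deriv f z" and "Dzb f z = 0"
    by (rule Dz_Dzb_eqI)+
qed

lemma Dz_Dzb_cnj_holomorphic:
  assumes "f field_differentiable (at z)"
  shows "Dz (\<lambda>x. cnj (f x)) z = 0" and "Dzb (\<lambda>x. cnj (f x)) z = cnj (deriv f z)"
proof -
  have "((\<lambda>x. cnj (f x)) has_derivative (\<lambda>v. 0 * v + cnj (deriv f z) * cnj v)) (at z)"
    using has_derivative_cnj[OF field_differentiable_derivI[OF assms, unfolded has_field_derivative_def]]
    by simp
  then show "Dz (\<lambda>x. cnj (f x)) z = 0" and "Dzb (\<lambda>x. cnj (f x)) z = cnj (deriv f z)"
    by (rule Dz_Dzb_eqI)+
qed

lemma Dz_Dzb_compose_holomorphic:
  assumes "h differentiable (at (f z))" and "f field_differentiable (at z)"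
  shows "Dz (\<lambda>x. h (f x)) z = deriv f z * Dz h (f z)"
    and "Dzb (\<lambda>x. h (f x)) z = cnj (deriv f z) * Dzb h (f z)"
proof -
  have "((\<lambda>x. h (f x)) has_derivative
      (\<lambda>v. (deriv f z * Dz h (f z)) * v + (cnj (deriv f z) * Dzb h (f z)) * cnj v)) (at z)"
    using has_derivative_compose[OF field_differentiable_derivI[OF assms(2), unfolded has_field_derivative_def]
        has_derivative_Wirtinger[OF assms(1)]]
    by (simp add: algebra_simps)
  then show "Dz (\<lambda>x. h (f x)) z = deriv f z * Dz h (f z)"
    and "Dzb (\<lambda>x. h (f x)) z = cnj (deriv f z) * Dzb h (f z)"
    by (rule Dz_Dzb_eqI)+
qed

section \<open>Reindexing and termwise differentiation of series\<close>

lemma Weierstrass_M_test_linear: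
  fixes f' :: "nat \<Rightarrow> 'a \<Rightarrow> 'c::real_normed_vector \<Rightarrow> 'b::banach"
  assumes bound: "\<And>n z v. z \<in> S \<Longrightarrow> norm (f' n z v) \<le> M n * norm v"
    and "summable M" and "e > 0"
  shows "\<forall>\<^sub>F n in sequentially. \<forall>z\<in>S. \<forall>v. norm ((\<Sum>i<n. f' i z v) - (\<Sum>i. f' i z v)) \<le> e * norm v"
proof -
  have summable_norm_f': "summable (\<lambda>n. norm (f' n z v))" if "z \<in> S" for z v
    using bound[OF that] by (intro summable_comparison_test'[OF summable_mult2[OF \<open>summable M\<close>]]) auto
  obtain N where N: "\<And>n. n \<ge> N \<Longrightarrow> norm (\<Sum>i. M (i + n)) < e"
    using suminf_exist_split[OF \<open>e > 0\<close> \<open>summable M\<close>] by blast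
  have "norm ((\<Sum>i<n. f' i z v) - (\<Sum>i. f' i z v)) \<le> e * norm v" if "n \<ge> N" "z \<in> S" for n z v
  proof -
    have tail: "summable (\<lambda>i. norm (f' (i + n) z v))"
      using summable_norm_f'[OF that(2), of v] by (rule summable_ignore_initial_segment)
    have "norm ((\<Sum>i<n. f' i z v) - (\<Sum>i. f' i z v)) = norm (\<Sum>i. f' (i + n) z v)"
      using suminf_split_initial_segment[OF summable_norm_cancel[OF summable_norm_f'[OF that(2), of v]], of n]
      by (simp add: norm_minus_commute)
    also have "\<dots> \<le> (\<Sum>i. norm (f' (i + n) z v))"
      using tail by (rule summable_norm)
    also have "\<dots> \<le> (\<Sum>i. M (i + n)) * norm v"
      using bound[OF that(2)] tail summable_ignore_initial_segment[OF \<open>summable M\<close>]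
      by (subst suminf_mult2) (auto intro!: suminf_le summable_mult2)
    also have "\<dots> \<le> e * norm v"
      using N[OF that(1)] by (intro mult_right_mono) auto
    finally show ?thesis .
  qed
  then show ?thesis
    unfolding eventually_sequentially by blast
qed

lemma has_derivative_suminf:
  fixes f :: "nat \<Rightarrow> 'a::real_normed_vector \<Rightarrow> 'b::banach"
  assumes "convex S" "open S" "x \<in> S"
    and deriv: "\<And>n z. z \<in> S \<Longrightarrow> (f n has_derivative f' n z) (at z)"
    and bound: "\<And>n z v. z \<in> S \<Longrightarrow> norm (f' n z v) \<le> M n * norm v"
    and "summable M"
    and summable: "\<And>z. z \<in> S \<Longrightarrow> summable (\<lambda>n. f n z)"
  shows "((\<lambda>z. \<Sum>n. f n z) has_derivative (\<lambda>v. \<Sum>n. f' n x v)) (at x)"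
proof -
  obtain g where g: "\<And>z. z \<in> S \<Longrightarrow> (\<lambda>n. f n z) sums g z \<and>
      (g has_derivative (\<lambda>v. \<Sum>i. f' i z v)) (at z within S)"
    using has_derivative_series[OF \<open>convex S\<close> has_derivative_at_withinI[OF deriv]
        Weierstrass_M_test_linear[OF bound \<open>summable M\<close>] \<open>x \<in> S\<close>
        summable_sums[OF summable[OF \<open>x \<in> S\<close>]]]
    by blast
  have "(g has_derivative (\<lambda>v. \<Sum>i. f' i x v)) (at x)"
    using g \<open>x \<in> S\<close> at_within_open[OF \<open>x \<in> S\<close> \<open>open S\<close>] by metis
  then show ?thesis
    by (rule has_derivative_transform_within_open[OF _ \<open>open S\<close> \<open>x \<in> S\<close>])
       (use g sums_unique in metis)
qed

lemma sums_infsum_reindex: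
  assumes "bij_betw \<sigma> UNIV I" "g summable_on I"
  shows "(\<lambda>n. g (\<sigma> n)) sums (\<Sum>\<^sub>\<infinity>i\<in>I. g i)"
  using has_sum_infsum[OF assms(2)] has_sum_reindex_bij_betw[OF assms(1)] has_sum_imp_sums by blast

lemma has_sum_reindex_vanishing:
  assumes "inj h" "\<And>x. x \<notin> range h \<Longrightarrow> g x = 0" "((\<lambda>x. g (h x)) has_sum s) UNIV"
  shows "(g has_sum s) UNIV"
proof -
  have "(g has_sum s) (range h)"
    using has_sum_reindex[OF assms(1), of g s] assms(3) by (simp add: o_def)
  moreover have "(g has_sum s) UNIV \<longleftrightarrow> (g has_sum s) (range h)"
    by (rule has_sum_cong_neutral) (simp_all add: assms(2))
  ultimately show ?thesis
    by simp
qed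

lemma has_derivative_infsum:
  fixes f :: "'i \<Rightarrow> 'a::real_normed_vector \<Rightarrow> 'b::banach"
  assumes "countable I" "infinite I" "convex S" "open S" "x \<in> S"
    and deriv: "\<And>i z. i \<in> I \<Longrightarrow> z \<in> S \<Longrightarrow> (f i has_derivative f' i z) (at z)"
    and bound: "\<And>i z v. i \<in> I \<Longrightarrow> z \<in> S \<Longrightarrow> norm (f' i z v) \<le> M i * norm v"
    and "M summable_on I"
    and summable: "\<And>z. z \<in> S \<Longrightarrow> (\<lambda>i. f i z) summable_on I"
  shows "((\<lambda>z. \<Sum>\<^sub>\<infinity>i\<in>I. f i z) has_derivative (\<lambda>v. \<Sum>\<^sub>\<infinity>i\<in>I. f' i x v)) (at x)"
proof -
  have \<sigma>: "bij_betw (from_nat_into I) UNIV I"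
    using assms(1,2) by (rule bij_betw_from_nat_into)
  let ?\<sigma> = "from_nat_into I"
  have \<sigma>I: "?\<sigma> n \<in> I" for n
    using \<sigma> bij_betwE by blast
  have abs_M: "(\<lambda>i. norm (M i)) summable_on I"
    using \<open>M summable_on I\<close> summable_on_iff_abs_summable_on_real by blast
  have bound': "norm (f' i z v) \<le> norm (M i) * norm v" if "i \<in> I" "z \<in> S" for i z v
    using bound[OF that, of v] by (smt (verit) mult_right_mono norm_ge_zero real_norm_def)
  have f'_summable: "(\<lambda>i. f' i x v) summable_on I" for v
  proof (rule abs_summable_summable, rule summable_on_comparison_test)
    show "(\<lambda>i. norm (M i) * norm v) summable_on I"
      using abs_M by (rule summable_on_cmult_left)
  qed (use bound' \<open>x \<in> S\<close> in auto)
  have "((\<lambda>z. \<Sum>n. f (?\<sigma> n) z) has_derivative (\<lambda>v. \<Sum>n. f' (?\<sigma> n) x v)) (at x)"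
  proof (rule has_derivative_suminf[OF assms(3-5)])
    show "summable (\<lambda>n. norm (M (?\<sigma> n)))"
      using sums_infsum_reindex[OF \<sigma> abs_M] by (rule sums_summable)
    show "summable (\<lambda>n. f (?\<sigma> n) z)" if "z \<in> S" for z
      using sums_infsum_reindex[OF \<sigma> summable[OF that]] by (rule sums_summable)
  qed (use deriv bound' \<sigma>I in auto)
  moreover have "(\<lambda>v. \<Sum>n. f' (?\<sigma> n) x v) = (\<lambda>v. \<Sum>\<^sub>\<infinity>i\<in>I. f' i x v)"
    by (intro ext sums_unique[symmetric] sums_infsum_reindex[OF \<sigma> f'_summable])
  ultimately have "((\<lambda>z. \<Sum>n. f (?\<sigma> n) z) has_derivative (\<lambda>v. \<Sum>\<^sub>\<infinity>i\<in>I. f' i x v)) (at x)"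
    by simp
  then show ?thesis
    by (rule has_derivative_transform_within_open[OF _ \<open>open S\<close> \<open>x \<in> S\<close>])
       (intro sums_unique[symmetric] sums_infsum_reindex[OF \<sigma> summable])
qed

section \<open>Double power series in \<open>Re w\<close> and \<open>Im w\<close>\<close>

definition double_series_abs_conv :: "(nat \<Rightarrow> nat \<Rightarrow> complex) \<Rightarrow> real \<Rightarrow> bool" where
  "double_series_abs_conv c r \<longleftrightarrow>
     (\<forall>s. 0 < s \<longrightarrow> s < r \<longrightarrow> (\<lambda>(j, k). norm (c j k) * s ^ (j + k)) summable_on UNIV)"

definition double_power_series :: "(nat \<Rightarrow> nat \<Rightarrow> complex) \<Rightarrow> complex \<Rightarrow> complex" where
  "double_power_series c w = (\<Sum>\<^sub>\<infinity>(j, k). c j k * of_real (Re w) ^ j * of_real (Im w) ^ k)"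

definition dx_coeffs :: "(nat \<Rightarrow> nat \<Rightarrow> complex) \<Rightarrow> nat \<Rightarrow> nat \<Rightarrow> complex" where
  "dx_coeffs c j k = of_nat (Suc j) * c (Suc j) k"

definition dy_coeffs :: "(nat \<Rightarrow> nat \<Rightarrow> complex) \<Rightarrow> nat \<Rightarrow> nat \<Rightarrow> complex" where
  "dy_coeffs c j k = of_nat (Suc k) * c j (Suc k)"

lemma linear_times_power_bounded:
  fixes s t :: real
  assumes "0 < s" "s < t"
  obtains B where "\<And>n. real n * s ^ (n - 1) \<le> B * t ^ n"
proof -
  have "norm (s / t) < 1"
    using assms by simp
  then have "Bseq (\<lambda>n. of_nat n * (s / t) ^ n)"
    using powser_times_n_limit_0 convergent_imp_Bseq convergentI by blast
  then obtain K where K: "\<And>n. norm (of_nat n * (s / t) ^ n) \<le> K"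
    unfolding Bseq_def by blast
  have "real n * s ^ (n - 1) \<le> K / s * t ^ n" for n
  proof (cases n)
    case (Suc m)
    have "real n * (s / t) ^ n \<le> K"
      using K[of n] assms by simp
    then have "real n * s ^ n \<le> K * t ^ n"
      using assms by (simp add: power_divide field_simps)
    then show ?thesis
      using assms Suc by (simp add: field_simps)
  qed (use K[of 0] assms in simp)
  then show thesis
    by (rule that)
qed

lemma double_series_derivative_majorant:
  assumes "double_series_abs_conv c r" "0 < \<rho>" "\<rho> < r"
  shows "(\<lambda>(j, k). norm (c j k) * (real (j + k) * \<rho> ^ (j + k - 1))) summable_on UNIV"
proof -
  define t where "t = (\<rho> + r) / 2"
  have t: "\<rho> < t" "t < r"
    using assms(3) by (auto simp: t_def)
  obtain B where B: "\<And>n. real n * \<rho> ^ (n - 1) \<le> B * t ^ n"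
    using linear_times_power_bounded[OF assms(2) t(1)] by blast
  have "(\<lambda>(j, k). norm (c j k) * t ^ (j + k)) summable_on UNIV"
    using assms t unfolding double_series_abs_conv_def by auto
  then have "(\<lambda>(j, k). B * (norm (c j k) * t ^ (j + k))) summable_on UNIV"
    using summable_on_cmult_right[of _ _ B] by (simp add: case_prod_unfold)
  then show ?thesis
  proof (rule summable_on_comparison_test)
    show "(case jk of (j, k) \<Rightarrow> norm (c j k) * (real (j + k) * \<rho> ^ (j + k - 1)))
        \<le> (case jk of (j, k) \<Rightarrow> B * (norm (c j k) * t ^ (j + k)))" for jk
      using mult_left_mono[OF B[of "fst jk + snd jk"], of "norm (c (fst jk) (snd jk))"]
      by (simp add: case_prod_beta' mult.left_commute)
  qed (use assms(2) in \<open>auto simp: case_prod_beta'\<close>)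
qed

lemma double_series_abs_conv_dx_coeffs:
  assumes "double_series_abs_conv c r"
  shows "double_series_abs_conv (dx_coeffs c) r"
  unfolding double_series_abs_conv_def
proof (intro allI impI)
  fix s :: real
  assume s: "0 < s" "s < r"
  define m where "m = (\<lambda>(j, k). norm (c j k) * (real (j + k) * s ^ (j + k - 1)))"
  have "m summable_on range (\<lambda>(j, k). (Suc j, k))"
    using summable_on_subset_banach[OF double_series_derivative_majorant[OF assms s]]
    unfolding m_def by blast
  then have "(\<lambda>(j, k). m (Suc j, k)) summable_on UNIV"
    by (subst (asm) summable_on_reindex) (auto simp: inj_def o_def case_prod_beta')
  then show "(\<lambda>(j, k). norm (dx_coeffs c j k) * s ^ (j + k)) summable_on UNIV"
  proof (rule summable_on_comparison_test)
    fix jk :: "nat \<times> nat"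
    obtain j k where jk: "jk = (j, k)"
      by fastforce
    have "norm (dx_coeffs c j k) * s ^ (j + k) = norm (c (Suc j) k) * (real (Suc j) * s ^ (j + k))"
      by (simp add: dx_coeffs_def norm_mult del: of_nat_Suc)
    also have "\<dots> \<le> m (Suc j, k)"
      using s by (auto simp: m_def intro!: mult_left_mono mult_right_mono)
    finally show "(case jk of (j, k) \<Rightarrow> norm (dx_coeffs c j k) * s ^ (j + k))
        \<le> (case jk of (j, k) \<Rightarrow> m (Suc j, k))"
      by (simp add: jk)
  qed (use s in \<open>auto simp: case_prod_beta'\<close>)
qed

lemma double_series_abs_conv_transpose:
  assumes "double_series_abs_conv c r"
  shows "double_series_abs_conv (\<lambda>j k. c k j) r"
  unfolding double_series_abs_conv_def
proof (intro allI impI)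
  fix s :: real
  assume "0 < s" "s < r"
  then have "(\<lambda>(j, k). norm (c j k) * s ^ (j + k)) summable_on UNIV"
    using assms unfolding double_series_abs_conv_def by blast
  moreover have "(\<lambda>(j, k). norm (c k j) * s ^ (j + k))
      = (\<lambda>jk. (\<lambda>(j, k). norm (c j k) * s ^ (j + k)) (prod.swap jk))"
    by (auto simp: fun_eq_iff add.commute)
  moreover have "bij_betw prod.swap UNIV (UNIV :: (nat \<times> nat) set)"
    by (simp add: bij_betw_def)
  ultimately show "(\<lambda>(j, k). norm (c k j) * s ^ (j + k)) summable_on UNIV"
    by (simp only: summable_on_reindex_bij_betw)
qed

lemma double_series_abs_conv_dy_coeffs:
  assumes "double_series_abs_conv c r"
  shows "double_series_abs_conv (dy_coeffs c) r"
proof -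
  have "dy_coeffs c = (\<lambda>j k. dx_coeffs (\<lambda>j k. c k j) k j)"
    by (simp add: fun_eq_iff dx_coeffs_def dy_coeffs_def)
  then show ?thesis
    using double_series_abs_conv_transpose[OF double_series_abs_conv_dx_coeffs[OF
        double_series_abs_conv_transpose[OF assms]]] by simp
qed

lemma double_series_abs_conv_lincomb:
  assumes "double_series_abs_conv c1 r" "double_series_abs_conv c2 r"
  shows "double_series_abs_conv (\<lambda>j k. a * c1 j k + b * c2 j k) r"
  unfolding double_series_abs_conv_def
proof (intro allI impI)
  fix s :: real
  assume s: "0 < s" "s < r"
  have "(\<lambda>jk. norm a * (\<lambda>(j, k). norm (c1 j k) * s ^ (j + k)) jk
      + norm b * (\<lambda>(j, k). norm (c2 j k) * s ^ (j + k)) jk) summable_on UNIV"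
    using assms s unfolding double_series_abs_conv_def
    by (intro summable_on_add summable_on_cmult_right) auto
  then show "(\<lambda>(j, k). norm (a * c1 j k + b * c2 j k) * s ^ (j + k)) summable_on UNIV"
  proof (rule summable_on_comparison_test)
    show "(\<lambda>(j, k). norm (a * c1 j k + b * c2 j k) * s ^ (j + k)) jk
        \<le> norm a * (\<lambda>(j, k). norm (c1 j k) * s ^ (j + k)) jk
          + norm b * (\<lambda>(j, k). norm (c2 j k) * s ^ (j + k)) jk" for jk
      using mult_right_mono[OF norm_triangle_ineq[of "a * c1 (fst jk) (snd jk)" "b * c2 (fst jk) (snd jk)"],
          of "s ^ (fst jk + snd jk)"] s
      by (simp add: case_prod_beta' norm_mult algebra_simps)
  qed (use s in \<open>auto simp: case_prod_beta'\<close>)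
qed

lemma norm_Re_Im_power_le:
  assumes "norm w \<le> s"
  shows "norm (of_real (Re w) ^ j * of_real (Im w) ^ k :: complex) \<le> s ^ (j + k)"
proof -
  have "\<bar>Re w\<bar> \<le> s" "\<bar>Im w\<bar> \<le> s"
    using assms abs_Re_le_cmod abs_Im_le_cmod order_trans by blast+
  then have "\<bar>Re w\<bar> ^ j * \<bar>Im w\<bar> ^ k \<le> s ^ j * s ^ k"
    by (intro mult_mono power_mono) auto
  then show ?thesis
    by (simp add: norm_mult norm_power power_add)
qed

lemma double_power_series_has_sum:
  assumes "double_series_abs_conv c r" "norm w < r"
  shows "((\<lambda>(j, k). c j k * of_real (Re w) ^ j * of_real (Im w) ^ k) has_sum double_power_series c w) UNIV"
proof -
  define s where "s = (norm w + r) / 2"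
  have s: "0 < s" "s < r" "norm w \<le> s"
    using assms(2) norm_ge_zero[of w] by (auto simp: s_def simp del: norm_ge_zero)
  have "(\<lambda>(j, k). norm (c j k) * s ^ (j + k)) summable_on UNIV"
    using assms(1) s unfolding double_series_abs_conv_def by blast
  then have "(\<lambda>jk. norm ((\<lambda>(j, k). c j k * of_real (Re w) ^ j * of_real (Im w) ^ k) jk)) summable_on UNIV"
  proof (rule summable_on_comparison_test)
    fix jk :: "nat \<times> nat"
    obtain j k where jk: "jk = (j, k)"
      by fastforce
    have "norm (c j k * of_real (Re w) ^ j * of_real (Im w) ^ k)
        = norm (c j k) * norm (of_real (Re w) ^ j * of_real (Im w) ^ k :: complex)"
      by (simp add: norm_mult mult.assoc)
    also have "\<dots> \<le> norm (c j k) * s ^ (j + k)"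
      by (rule mult_left_mono[OF norm_Re_Im_power_le[OF s(3)]]) simp
    finally show "norm ((\<lambda>(j, k). c j k * of_real (Re w) ^ j * of_real (Im w) ^ k) jk)
        \<le> (\<lambda>(j, k). norm (c j k) * s ^ (j + k)) jk"
      by (simp add: jk)
  qed simp
  then show ?thesis
    unfolding double_power_series_def by (rule has_sum_infsum[OF abs_summable_summable])
qed

lemma double_power_series_lincomb:
  assumes "double_series_abs_conv c1 r" "double_series_abs_conv c2 r" "norm w < r"
  shows "double_power_series (\<lambda>j k. a * c1 j k + b * c2 j k) w
    = a * double_power_series c1 w + b * double_power_series c2 w"
proof -
  have "((\<lambda>(j, k). (a * c1 j k + b * c2 j k) * of_real (Re w) ^ j * of_real (Im w) ^ k)
      has_sum a * double_power_series c1 w + b * double_power_series c2 w) UNIV"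
    using has_sum_add[OF has_sum_cmult_right[OF double_power_series_has_sum[OF assms(1,3)], of a]
        has_sum_cmult_right[OF double_power_series_has_sum[OF assms(2,3)], of b]]
    by (rule has_sum_cong[THEN iffD1, rotated]) (auto simp: algebra_simps)
  then show ?thesis
    unfolding double_power_series_def by (rule infsumI)
qed

lemma norm_monomial_derivative_le:
  fixes z v :: complex
  assumes "norm z \<le> \<rho>" "0 < \<rho>"
  shows "norm (of_nat j * (of_real (Re z) ^ (j - 1) * of_real (Im z) ^ k) * of_real (Re v)
      + of_nat k * (of_real (Re z) ^ j * of_real (Im z) ^ (k - 1)) * of_real (Im v) :: complex)
    \<le> real (j + k) * \<rho> ^ (j + k - 1) * norm v"
proof -
  have "real j * norm (of_real (Re z) ^ (j - 1) * of_real (Im z) ^ k :: complex) \<le> real j * \<rho> ^ (j + k - 1)"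
    using norm_Re_Im_power_le[OF assms(1), of "j - 1" k] by (cases j) auto
  from mult_mono[OF this abs_Re_le_cmod[of v]]
  have "norm (of_nat j * (of_real (Re z) ^ (j - 1) * of_real (Im z) ^ k) * of_real (Re v) :: complex)
      \<le> real j * \<rho> ^ (j + k - 1) * norm v"
    using assms(2) by (simp add: norm_mult)
  moreover have "real k * norm (of_real (Re z) ^ j * of_real (Im z) ^ (k - 1) :: complex) \<le> real k * \<rho> ^ (j + k - 1)"
    using norm_Re_Im_power_le[OF assms(1), of j "k - 1"] by (cases k) auto
  from mult_mono[OF this abs_Im_le_cmod[of v]]
  have "norm (of_nat k * (of_real (Re z) ^ j * of_real (Im z) ^ (k - 1)) * of_real (Im v) :: complex)
      \<le> real k * \<rho> ^ (j + k - 1) * norm v"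
    using assms(2) by (simp add: norm_mult)
  ultimately show ?thesis
    by (smt (verit) norm_triangle_ineq of_nat_add distrib_right)
qed

lemma double_power_series_dx_coeffs_has_sum:
  assumes "double_series_abs_conv c r" "norm w < r"
  shows "((\<lambda>(j, k). c j k * of_nat j * (of_real (Re w) ^ (j - 1) * of_real (Im w) ^ k))
    has_sum double_power_series (dx_coeffs c) w) UNIV"
proof (rule has_sum_reindex_vanishing[where h = "\<lambda>(j, k). (Suc j, k)"])
  show "((\<lambda>jk. (\<lambda>(j, k). c j k * of_nat j * (of_real (Re w) ^ (j - 1) * of_real (Im w) ^ k))
      ((\<lambda>(j, k). (Suc j, k)) jk)) has_sum double_power_series (dx_coeffs c) w) UNIV"
    using double_power_series_has_sum[OF double_series_abs_conv_dx_coeffs[OF assms(1)] assms(2)]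
    by (simp add: dx_coeffs_def case_prod_beta' mult_ac)
qed (auto simp: inj_def image_iff case_prod_beta' gr0_conv_Suc)

lemma double_power_series_dy_coeffs_has_sum:
  assumes "double_series_abs_conv c r" "norm w < r"
  shows "((\<lambda>(j, k). c j k * of_nat k * (of_real (Re w) ^ j * of_real (Im w) ^ (k - 1)))
    has_sum double_power_series (dy_coeffs c) w) UNIV"
proof (rule has_sum_reindex_vanishing[where h = "\<lambda>(j, k). (j, Suc k)"])
  show "((\<lambda>jk. (\<lambda>(j, k). c j k * of_nat k * (of_real (Re w) ^ j * of_real (Im w) ^ (k - 1)))
      ((\<lambda>(j, k). (j, Suc k)) jk)) has_sum double_power_series (dy_coeffs c) w) UNIV"
    using double_power_series_has_sum[OF double_series_abs_conv_dy_coeffs[OF assms(1)] assms(2)]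
    by (simp add: dy_coeffs_def case_prod_beta' mult_ac)
qed (auto simp: inj_def image_iff case_prod_beta' gr0_conv_Suc)

lemma has_derivative_double_power_series:
  assumes "double_series_abs_conv c r" "norm w < r"
  shows "(double_power_series c has_derivative (\<lambda>v. of_real (Re v) * double_power_series (dx_coeffs c) w
      + of_real (Im v) * double_power_series (dy_coeffs c) w)) (at w)"
proof -
  define \<rho> where "\<rho> = (norm w + r) / 2"
  have \<rho>: "0 < \<rho>" "\<rho> < r" "norm w < \<rho>"
    using assms(2) norm_ge_zero[of w] by (auto simp: \<rho>_def simp del: norm_ge_zero)
  define X where "X = (\<lambda>z::complex. complex_of_real (Re z))"
  define Y where "Y = (\<lambda>z::complex. complex_of_real (Im z))"
  define f where "f = (\<lambda>(j, k) z. c j k * X z ^ j * Y z ^ k)"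
  define f' where "f' = (\<lambda>(j, k) z v. c j k *
      (of_nat j * (X z ^ (j - 1) * Y z ^ k) * X v + of_nat k * (X z ^ j * Y z ^ (k - 1)) * Y v))"
  define M where "M = (\<lambda>(j, k). norm (c j k) * (real (j + k) * \<rho> ^ (j + k - 1)))"
  have "(f jk has_derivative f' jk z) (at z)" for jk z
    unfolding f_def f'_def X_def Y_def
    by (auto simp: case_prod_beta' algebra_simps intro!: derivative_eq_intros)
  moreover have "norm (f' jk z v) \<le> M jk * norm v" if "z \<in> ball 0 \<rho>" for jk z v
    using norm_monomial_derivative_le[where j = "fst jk" and k = "snd jk" and v = v, OF _ \<rho>(1)] that
    by (auto simp: f'_def M_def X_def Y_def case_prod_beta' norm_mult mult.assoc intro!: mult_left_mono)
  moreover have "(\<lambda>jk. f jk z) summable_on UNIV" if "z \<in> ball 0 \<rho>" for z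
    using double_power_series_has_sum[OF assms(1), of z] that \<rho>
    by (auto simp: summable_on_def f_def X_def Y_def case_prod_beta')
  ultimately have "((\<lambda>z. \<Sum>\<^sub>\<infinity>jk. f jk z) has_derivative (\<lambda>v. \<Sum>\<^sub>\<infinity>jk. f' jk w v)) (at w)"
    using double_series_derivative_majorant[OF assms(1) \<rho>(1,2)] \<rho>(3)
    by (intro has_derivative_infsum[where S = "ball 0 \<rho>" and M = M]) (auto simp: M_def finite_prod)
  moreover have "(\<lambda>z. \<Sum>\<^sub>\<infinity>jk. f jk z) = double_power_series c"
    by (simp add: fun_eq_iff double_power_series_def f_def X_def Y_def case_prod_beta')
  moreover have "(\<Sum>\<^sub>\<infinity>jk. f' jk w v) = X v * double_power_series (dx_coeffs c) w
      + Y v * double_power_series (dy_coeffs c) w" for v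
    using has_sum_add[OF has_sum_cmult_right[OF double_power_series_dx_coeffs_has_sum[OF assms], of "X v"]
        has_sum_cmult_right[OF double_power_series_dy_coeffs_has_sum[OF assms], of "Y v"]]
    by (intro infsumI, rule has_sum_cong[THEN iffD1, rotated])
       (auto simp: f'_def X_def Y_def case_prod_beta' algebra_simps)
  ultimately show ?thesis
    by (simp add: X_def Y_def)
qed

section \<open>Real-analytic complex-valued functions\<close>

text \<open>The complex-valued counterpart of \<^const>\<open>real_analytic_on\<close>, with expansions on discs
  of radius \<open>r\<close>; absolute convergence on the bidiscs of radius below \<open>r\<close>, which termwise
  differentiation needs, is required explicitly.\<close>
definition real_analytic_complex_on :: "(complex \<Rightarrow> complex) \<Rightarrow> complex set \<Rightarrow> bool" where
  "real_analytic_complex_on h U \<longleftrightarrow> (\<forall>z0\<in>U. \<exists>r>0. \<exists>c. double_series_abs_conv c r \<and>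
     (\<forall>w. norm w < r \<longrightarrow> h (z0 + w) = double_power_series c w))"

lemma real_analytic_complex_on_of_real:
  assumes "real_analytic_on F U"
  shows "real_analytic_complex_on (\<lambda>z. of_real (F z)) U"
  unfolding real_analytic_complex_on_def
proof
  fix z0
  assume "z0 \<in> U"
  then obtain r c where r: "r > 0" and F: "\<And>x y. \<bar>x\<bar> < r \<and> \<bar>y\<bar> < r \<Longrightarrow>
      ((\<lambda>(j, k). c j k * x ^ j * y ^ k) has_sum F (z0 + Complex x y)) UNIV"
    using assms unfolding real_analytic_on_def by blast
  define cc where "cc j k = complex_of_real (c j k)" for j k
  have "double_series_abs_conv cc r"
    unfolding double_series_abs_conv_def
  proof (intro allI impI)
    fix s :: real
    assume s: "0 < s" "s < r"
    then have "(\<lambda>(j, k). c j k * s ^ j * s ^ k) summable_on UNIV"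
      using F[of s s] summable_on_def by auto
    then have "(\<lambda>jk. norm ((\<lambda>(j, k). c j k * s ^ j * s ^ k) jk)) summable_on UNIV"
      using summable_on_iff_abs_summable_on_real by blast
    then show "(\<lambda>(j, k). norm (cc j k) * s ^ (j + k)) summable_on UNIV"
      by (rule summable_on_cong[THEN iffD1, rotated])
         (use s in \<open>auto simp: cc_def abs_mult power_add\<close>)
  qed
  moreover have "of_real (F (z0 + w)) = double_power_series cc w" if "norm w < r" for w
  proof -
    have "\<bar>Re w\<bar> < r" "\<bar>Im w\<bar> < r"
      using that abs_Re_le_cmod abs_Im_le_cmod le_less_trans by blast+
    then have "((\<lambda>(j, k). c j k * Re w ^ j * Im w ^ k) has_sum F (z0 + w)) UNIV"
      using F[of "Re w" "Im w"] by (simp add: complex_eq_iff)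
    from has_sum_of_real[OF this]
    show ?thesis
      unfolding double_power_series_def by (intro infsumI[symmetric]) (simp add: cc_def case_prod_beta')
  qed
  ultimately show "\<exists>r>0. \<exists>c. double_series_abs_conv c r \<and>
      (\<forall>w. norm w < r \<longrightarrow> of_real (F (z0 + w)) = double_power_series c w)"
    using r by blast
qed

lemma real_analytic_complex_on_has_derivative:
  assumes "real_analytic_complex_on h U" "z0 \<in> U"
  obtains r c where "r > 0" "double_series_abs_conv c r"
    "\<And>w. norm w < r \<Longrightarrow> (h has_derivative (\<lambda>v. of_real (Re v) * double_power_series (dx_coeffs c) w
        + of_real (Im v) * double_power_series (dy_coeffs c) w)) (at (z0 + w))"
proof -
  obtain r c where r: "r > 0" and c: "double_series_abs_conv c r"
    and h: "\<And>w. norm w < r \<Longrightarrow> h (z0 + w) = double_power_series c w"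
    using assms unfolding real_analytic_complex_on_def by blast
  have "(h has_derivative (\<lambda>v. of_real (Re v) * double_power_series (dx_coeffs c) w
      + of_real (Im v) * double_power_series (dy_coeffs c) w)) (at (z0 + w))" if "norm w < r" for w
  proof (rule has_derivative_transform_within_open)
    show "((\<lambda>z. double_power_series c (z - z0)) has_derivative
      (\<lambda>v. of_real (Re v) * double_power_series (dx_coeffs c) w
        + of_real (Im v) * double_power_series (dy_coeffs c) w)) (at (z0 + w))"
      using has_derivative_compose[OF has_derivative_diff[OF has_derivative_ident has_derivative_const]
          has_derivative_double_power_series[OF c, of "z0 + w - z0"]] that
      by simp
    show "double_power_series c (z - z0) = h z" if "z \<in> ball z0 r" for z
      using h[of "z - z0"] that by (simp add: dist_norm norm_minus_commute)
  qed (use that in \<open>auto simp: dist_norm\<close>)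
  with r c show thesis
    by (rule that)
qed

lemma real_analytic_complex_on_imp_differentiable:
  assumes "real_analytic_complex_on h U" "z \<in> U"
  shows "h differentiable (at z)"
proof -
  obtain r c where "r > 0" and D: "\<And>w. norm w < r \<Longrightarrow> (h has_derivative
      (\<lambda>v. of_real (Re v) * double_power_series (dx_coeffs c) w
        + of_real (Im v) * double_power_series (dy_coeffs c) w)) (at (z + w))"
    using real_analytic_complex_on_has_derivative[OF assms] by blast
  from D[of 0] \<open>r > 0\<close> show ?thesis
    unfolding differentiable_def by auto
qed

lemma real_analytic_complex_on_dx_dy:
  assumes "real_analytic_complex_on h U"
  shows "real_analytic_complex_on (\<lambda>z. a * dx h z + b * dy h z) U"
  unfolding real_analytic_complex_on_def
proof
  fix z0
  assume "z0 \<in> U"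
  then obtain r c where r: "r > 0" and c: "double_series_abs_conv c r"
    and h: "\<And>w. norm w < r \<Longrightarrow> (h has_derivative
      (\<lambda>v. of_real (Re v) * double_power_series (dx_coeffs c) w
        + of_real (Im v) * double_power_series (dy_coeffs c) w)) (at (z0 + w))"
    using real_analytic_complex_on_has_derivative[OF assms] by blast
  have "a * dx h (z0 + w) + b * dy h (z0 + w)
      = double_power_series (\<lambda>j k. a * dx_coeffs c j k + b * dy_coeffs c j k) w" if "norm w < r" for w
    using frechet_derivative_at[OF h[OF that], symmetric] double_power_series_lincomb[OF
        double_series_abs_conv_dx_coeffs[OF c] double_series_abs_conv_dy_coeffs[OF c] that]
    by (simp add: dx_def dy_def)
  then show "\<exists>r>0. \<exists>c. double_series_abs_conv c r \<and>
      (\<forall>w. norm w < r \<longrightarrow> a * dx h (z0 + w) + b * dy h (z0 + w) = double_power_series c w)"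
    using r double_series_abs_conv_lincomb[OF double_series_abs_conv_dx_coeffs[OF c]
        double_series_abs_conv_dy_coeffs[OF c]] by blast
qed

lemma real_analytic_complex_on_Dz:
  assumes "real_analytic_complex_on h U"
  shows "real_analytic_complex_on (Dz h) U"
proof -
  have "Dz h = (\<lambda>z. 1 / 2 * dx h z + - \<i> / 2 * dy h z)"
    by (simp add: fun_eq_iff Dz_def field_simps)
  then show ?thesis
    using real_analytic_complex_on_dx_dy[OF assms] by (simp only:)
qed

lemma real_analytic_complex_on_Dzb:
  assumes "real_analytic_complex_on h U"
  shows "real_analytic_complex_on (Dzb h) U"
proof -
  have "Dzb h = (\<lambda>z. 1 / 2 * dx h z + \<i> / 2 * dy h z)"
    by (simp add: fun_eq_iff Dzb_def field_simps)
  then show ?thesis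
    using real_analytic_complex_on_dx_dy[OF assms] by (simp only:)
qed

section \<open>The fourth-order invariant under holomorphic pullback\<close>

definition rigid_invariant :: "(complex \<Rightarrow> complex) \<Rightarrow> complex \<Rightarrow> complex" where
  "rigid_invariant h z =
     Dz (Dz (Dzb (Dzb h))) z * Dz (Dzb h) z - Dz (Dz (Dzb h)) z * Dz (Dzb (Dzb h)) z"

locale holomorphic_pullback =
  fixes U V :: "complex set" and f p q \<Phi> E :: "complex \<Rightarrow> complex" and c :: complex
  assumes open_U: "open U"
    and holomorphic: "f holomorphic_on U" "p holomorphic_on U" "q holomorphic_on U"
    and maps_into: "f ` U \<subseteq> V"
    and smooth: "\<And>h y. h \<in> {\<Phi>, Dzb \<Phi>, Dzb (Dzb \<Phi>), Dz (Dzb \<Phi>), Dz (Dzb (Dzb \<Phi>))} \<Longrightarrow> y \<in> V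
       \<Longrightarrow> h differentiable (at y)"
    and pullback: "\<And>x. x \<in> U \<Longrightarrow> E x = c * \<Phi> (f x) + p x + cnj (q x)"
begin

lemma holomorphic_field_differentiable:
  assumes "h \<in> {f, deriv f, deriv (deriv f), p, q, deriv q, deriv (deriv q)}" "x \<in> U"
  shows "h field_differentiable (at x)"
  using assms open_U holomorphic by (auto intro!: holomorphic_on_imp_differentiable_at holomorphic_deriv)

lemma holomorphic_differentiable:
  assumes "h \<in> {f, deriv f, deriv (deriv f), p, q, deriv q, deriv (deriv q)}" "x \<in> U"
  shows "h differentiable (at x)"
  using holomorphic_field_differentiable[OF assms] by (rule field_differentiable_imp_differentiable)

lemma maps_into_V: "x \<in> U \<Longrightarrow> f x \<in> V"
  using maps_into by blast

lemma differentiable_compose_f: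
  assumes "h \<in> {\<Phi>, Dzb \<Phi>, Dzb (Dzb \<Phi>), Dz (Dzb \<Phi>), Dz (Dzb (Dzb \<Phi>))}" "x \<in> U"
  shows "(\<lambda>y. h (f y)) differentiable (at x)"
  using assms by (intro differentiable_compose[OF smooth holomorphic_differentiable] maps_into_V) auto

lemmas Wirtinger_rules = Dz_Dzb_add Dz_Dzb_mult Dz_Dzb_holomorphic Dz_Dzb_cnj_holomorphic
  Dz_Dzb_compose_holomorphic[OF smooth] differentiable_cnj_iff holomorphic_field_differentiable
  holomorphic_differentiable differentiable_compose_f maps_into_V

lemma Dzb_pullback:
  assumes "x \<in> U"
  shows "Dzb E x = c * (cnj (deriv f x) * Dzb \<Phi> (f x)) + cnj (deriv q x)"
  using Dz_Dzb_cong_open(2)[OF open_U assms pullback] assms by (simp add: Wirtinger_rules)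

lemma Dzb_Dzb_pullback:
  assumes "x \<in> U"
  shows "Dzb (Dzb E) x = c * (cnj (deriv (deriv f) x) * Dzb \<Phi> (f x)
      + cnj (deriv f x) * (cnj (deriv f x) * Dzb (Dzb \<Phi>) (f x))) + cnj (deriv (deriv q) x)"
  using Dz_Dzb_cong_open(2)[OF open_U assms Dzb_pullback] assms by (simp add: Wirtinger_rules)

lemma Dz_Dzb_pullback:
  assumes "x \<in> U"
  shows "Dz (Dzb E) x = c * (cnj (deriv f x) * (deriv f x * Dz (Dzb \<Phi>) (f x)))"
  using Dz_Dzb_cong_open(1)[OF open_U assms Dzb_pullback] assms by (simp add: Wirtinger_rules)

lemma Dz_Dz_Dzb_pullback:
  assumes "x \<in> U"
  shows "Dz (Dz (Dzb E)) x = c * (cnj (deriv f x) * (deriv (deriv f) x * Dz (Dzb \<Phi>) (f x)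
      + deriv f x * (deriv f x * Dz (Dz (Dzb \<Phi>)) (f x))))"
  using Dz_Dzb_cong_open(1)[OF open_U assms Dz_Dzb_pullback] assms by (simp add: Wirtinger_rules)

lemma Dz_Dzb_Dzb_pullback:
  assumes "x \<in> U"
  shows "Dz (Dzb (Dzb E)) x = c * (cnj (deriv (deriv f) x) * (deriv f x * Dz (Dzb \<Phi>) (f x))
      + cnj (deriv f x) * (cnj (deriv f x) * (deriv f x * Dz (Dzb (Dzb \<Phi>)) (f x))))"
  using Dz_Dzb_cong_open(1)[OF open_U assms Dzb_Dzb_pullback] assms by (simp add: Wirtinger_rules)

lemma Dz_Dz_Dzb_Dzb_pullback:
  assumes "x \<in> U"
  shows "Dz (Dz (Dzb (Dzb E))) x = c * (cnj (deriv (deriv f) x) * (deriv (deriv f) x * Dz (Dzb \<Phi>) (f x)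
        + deriv f x * (deriv f x * Dz (Dz (Dzb \<Phi>)) (f x)))
      + cnj (deriv f x) * (cnj (deriv f x) * (deriv (deriv f) x * Dz (Dzb (Dzb \<Phi>)) (f x)
        + deriv f x * (deriv f x * Dz (Dz (Dzb (Dzb \<Phi>))) (f x)))))"
  using Dz_Dzb_cong_open(1)[OF open_U assms Dz_Dzb_Dzb_pullback] assms by (simp add: Wirtinger_rules)

theorem rigid_invariant_pullback:
  assumes "z \<in> U"
  shows "rigid_invariant E z = c\<^sup>2 * (deriv f z * cnj (deriv f z)) ^ 3 * rigid_invariant \<Phi> (f z)"
  unfolding rigid_invariant_def
  using Dz_Dz_Dzb_Dzb_pullback[OF assms] Dz_Dzb_pullback[OF assms] Dz_Dz_Dzb_pullback[OF assms]
    Dz_Dzb_Dzb_pullback[OF assms]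
  by (simp add: algebra_simps power2_eq_square power3_eq_cube)

end

theorem lemma2p9:
  fixes F F' :: "complex \<Rightarrow> real" and f g :: "complex \<Rightarrow> complex"
    and a :: real and U V :: "complex set"
  assumes "open U" and "open V"
    and "f holomorphic_on U" and "g holomorphic_on U" and "inj_on f U"
    and "f ` U \<subseteq> V"
    and "a \<noteq> 0"
    and "real_analytic_on F U" and "real_analytic_on F' V"
    and maps: "\<forall>z\<in>U. \<forall>w. Re w = F z \<longrightarrow> Re (complex_of_real a * w + g z) = F' (f z)"
  shows "\<forall>z\<in>U.
     Dz (Dz (Dzb (Dzb (\<lambda>t. complex_of_real (F t))))) z * Dz (Dzb (\<lambda>t. complex_of_real (F t))) z
       - Dz (Dz (Dzb (\<lambda>t. complex_of_real (F t)))) z * Dz (Dzb (Dzb (\<lambda>t. complex_of_real (F t)))) z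
     = (1 / complex_of_real (a ^ 2)) * (deriv f z * cnj (deriv f z)) ^ 3 *
       (Dz (Dz (Dzb (Dzb (\<lambda>t. complex_of_real (F' t))))) (f z) * Dz (Dzb (\<lambda>t. complex_of_real (F' t))) (f z)
        - Dz (Dz (Dzb (\<lambda>t. complex_of_real (F' t)))) (f z) * Dz (Dzb (Dzb (\<lambda>t. complex_of_real (F' t)))) (f z))"
proof -
  text \<open>The rigid map gives \<open>a F = F' \<circ> f - Re g\<close> on \<open>U\<close>, and \<open>Re g = (g + cnj g) / 2\<close>.\<close>
  define p where "p = (\<lambda>t. - g t / (2 * complex_of_real a))"
  have pullback: "complex_of_real (F x) = 1 / complex_of_real a * complex_of_real (F' (f x)) + p x + cnj (p x)"
    if "x \<in> U" for x
  proof -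
    have "F' (f x) = a * F x + Re (g x)"
      using maps[rule_format, OF that, of "complex_of_real (F x)"] by simp
    then show ?thesis
      using assms(7) by (simp add: p_def complex_eq_iff field_simps algebra_simps)
  qed
  have analytic: "real_analytic_complex_on (\<lambda>t. complex_of_real (F' t)) V"
    using assms(9) by (rule real_analytic_complex_on_of_real)
  interpret holomorphic_pullback U V f p p "\<lambda>t. complex_of_real (F' t)" "\<lambda>t. complex_of_real (F t)"
    "1 / complex_of_real a"
    using assms(1,3,4,6,7) analytic pullback
    by unfold_locales (auto simp: p_def intro!: holomorphic_intros real_analytic_complex_on_imp_differentiable
        real_analytic_complex_on_Dz real_analytic_complex_on_Dzb)
  show ?thesis
    using rigid_invariant_pullback by (simp add: rigid_invariant_def power_divide)
qed

end
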